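(* Let $G$ be a connected vertex-transitive graph with at least one edge. Then $\mathrm{ldim}_f(G)=\frac{|V(G)|}{l(G)}$, where $l(G)=\min\{|L(uv)|: uv\in E(G)\}$.
   Context: All graphs are finite and simple; $d$ is the shortest-path distance. $G$ is vertex-transitive if its automorphism group acts transitively on $V(G)$. For an edge $uv$, $L(uv)=\{x\in V(G): d(u,x)\neq d(v,x)\}$. A function $f:V(G)\to[0,1]$ is a local resolving function if $\sum_{x\in L(uv)}f(x)\geq 1$ for every edge $uv$; $\mathrm{ldim}_f(G)$ is the minimum of $\sum_v f(v)$ over all local resolving functions. *)

theory Defs
  imports Complex_Main
begin

definition simple_graph :: "'a set \<Rightarrow> ('a \<Rightarrow> 'a \<Rightarrow> bool) \<Rightarrow> bool" where
  "simple_graph V E \<longleftrightarrow> finite V \<and> (\<forall>x y. E x y \<longrightarrow> x \<in> V \<and> y \<in> V)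
     \<and> (\<forall>x y. E x y \<longrightarrow> E y x) \<and> (\<forall>x. \<not> E x x)"

definition connected_graph :: "'a set \<Rightarrow> ('a \<Rightarrow> 'a \<Rightarrow> bool) \<Rightarrow> bool" where
  "connected_graph V E \<longleftrightarrow> (\<forall>u\<in>V. \<forall>v\<in>V. \<exists>n. (E ^^ n) u v)"

definition gdist :: "('a \<Rightarrow> 'a \<Rightarrow> bool) \<Rightarrow> 'a \<Rightarrow> 'a \<Rightarrow> nat" where
  "gdist E u v = (LEAST n. (E ^^ n) u v)"

definition graph_aut :: "'a set \<Rightarrow> ('a \<Rightarrow> 'a \<Rightarrow> bool) \<Rightarrow> ('a \<Rightarrow> 'a) \<Rightarrow> bool" where
  "graph_aut V E \<sigma> \<longleftrightarrow> bij_betw \<sigma> V V \<and> (\<forall>x\<in>V. \<forall>y\<in>V. E x y \<longleftrightarrow> E (\<sigma> x) (\<sigma> y))"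

definition vertex_transitive :: "'a set \<Rightarrow> ('a \<Rightarrow> 'a \<Rightarrow> bool) \<Rightarrow> bool" where
  "vertex_transitive V E \<longleftrightarrow> (\<forall>u\<in>V. \<forall>v\<in>V. \<exists>\<sigma>. graph_aut V E \<sigma> \<and> \<sigma> u = v)"

definition Lset :: "'a set \<Rightarrow> ('a \<Rightarrow> 'a \<Rightarrow> bool) \<Rightarrow> 'a \<Rightarrow> 'a \<Rightarrow> 'a set" where
  "Lset V E u v = {x\<in>V. gdist E u x \<noteq> gdist E v x}"

definition local_resolving_fun :: "'a set \<Rightarrow> ('a \<Rightarrow> 'a \<Rightarrow> bool) \<Rightarrow> ('a \<Rightarrow> real) \<Rightarrow> bool" where
  "local_resolving_fun V E f \<longleftrightarrow> (\<forall>x\<in>V. 0 \<le> f x \<and> f x \<le> 1)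
     \<and> (\<forall>u v. E u v \<longrightarrow> (\<Sum>x\<in>Lset V E u v. f x) \<ge> 1)"

text \<open>Minimum total weight of a local resolving function (taken as infimum; the minimum is attained).\<close>
definition ldim_f :: "'a set \<Rightarrow> ('a \<Rightarrow> 'a \<Rightarrow> bool) \<Rightarrow> real" where
  "ldim_f V E = Inf {(\<Sum>v\<in>V. f v) | f. local_resolving_fun V E f}"

definition lG :: "'a set \<Rightarrow> ('a \<Rightarrow> 'a \<Rightarrow> bool) \<Rightarrow> nat" where
  "lG V E = Min {card (Lset V E u v) | u v. E u v}"

end

theory Submission
  imports Defs
begin

text \<open>Automorphisms preserve distances, so they map the sets L(uv) onto one another and hence
  permute the edges uv with |L(uv)| = l(G). By vertex transitivity every vertex therefore lies
  in the same number c of the sets L(uv) of these minimal edges. Double counting the incidences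
  gives c |V| = m l(G), where m is the number of minimal edges, and summing the constraints of a
  local resolving function f over the minimal edges gives m \<le> c \<Sum> f; hence
  \<Sum> f \<ge> |V| / l(G). The constant function 1 / l(G) attains this bound.\<close>

lemma sum_sum_uniform_cover:
  fixes g :: "'a \<Rightarrow> real"
  assumes "finite V" "finite P" and sub: "\<And>p. p \<in> P \<Longrightarrow> L p \<subseteq> V"
    and deg: "\<And>x. x \<in> V \<Longrightarrow> card {p \<in> P. x \<in> L p} = c"
  shows "(\<Sum>p\<in>P. \<Sum>x\<in>L p. g x) = real c * (\<Sum>x\<in>V. g x)"
proof -
  have "(\<Sum>p\<in>P. \<Sum>x\<in>L p. g x) = (\<Sum>p\<in>P. \<Sum>x\<in>{x \<in> V. x \<in> L p}. g x)"
    using sub by (intro sum.cong) auto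
  also have "\<dots> = (\<Sum>x\<in>V. \<Sum>p\<in>{p \<in> P. x \<in> L p}. g x)"
    using sum.swap_restrict[OF assms(2,1), of "\<lambda>_ x. g x" "\<lambda>p x. x \<in> L p"] by simp
  also have "\<dots> = (\<Sum>x\<in>V. real c * g x)"
    using deg by (intro sum.cong) auto
  finally show ?thesis by (simp add: sum_distrib_left)
qed

lemma uniform_cover_weight_bound:
  fixes f :: "'a \<Rightarrow> real"
  assumes "finite V" "finite P" "P \<noteq> {}" "l > 0"
    and sub: "\<And>p. p \<in> P \<Longrightarrow> L p \<subseteq> V"
    and size: "\<And>p. p \<in> P \<Longrightarrow> card (L p) = l"
    and deg: "\<And>x. x \<in> V \<Longrightarrow> card {p \<in> P. x \<in> L p} = c"
    and cover: "\<And>p. p \<in> P \<Longrightarrow> 1 \<le> (\<Sum>x\<in>L p. f x)"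
  shows "real (card V) / real l \<le> (\<Sum>x\<in>V. f x)"
proof -
  have "(\<Sum>p\<in>P. \<Sum>x\<in>L p. 1::real) = real (card P) * real l"
    using size by simp
  then have incidences: "real (card P) * real l = real c * real (card V)"
    using sum_sum_uniform_cover[OF assms(1,2) sub deg, of "\<lambda>_. 1"] by simp
  have "real (card P) \<le> (\<Sum>p\<in>P. \<Sum>x\<in>L p. f x)"
    using sum_mono[of P "\<lambda>_. 1::real", OF cover] by simp
  also have "\<dots> = real c * (\<Sum>x\<in>V. f x)"
    using sum_sum_uniform_cover[OF assms(1,2) sub deg] .
  finally have weight: "real (card P) \<le> real c * (\<Sum>x\<in>V. f x)" .
  have "card P > 0" using assms(2,3) by (simp add: card_gt_0_iff)
  then have "c > 0" using incidences \<open>l > 0\<close> by (cases "c = 0") auto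
  have "real c * real (card V) = real (card P) * real l"
    using incidences by simp
  also have "\<dots> \<le> real c * (\<Sum>x\<in>V. f x) * real l"
    using weight by (simp add: mult_right_mono)
  finally have "real (card V) \<le> (\<Sum>x\<in>V. f x) * real l"
    using \<open>c > 0\<close> by simp
  then show ?thesis using \<open>l > 0\<close> by (simp add: divide_le_eq)
qed

lemma graph_aut_image: "graph_aut V E \<sigma> \<Longrightarrow> \<sigma> ` V = V"
  unfolding graph_aut_def bij_betw_def by blast

lemma graph_aut_inj_on: "graph_aut V E \<sigma> \<Longrightarrow> inj_on \<sigma> V"
  unfolding graph_aut_def bij_betw_def by blast

lemma relpowp_graph_aut_iff:
  assumes sg: "simple_graph V E" and au: "graph_aut V E \<sigma>" and "x \<in> V" "y \<in> V"
  shows "(E ^^ n) (\<sigma> x) (\<sigma> y) \<longleftrightarrow> (E ^^ n) x y"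
  using \<open>y \<in> V\<close>
proof (induction n arbitrary: y)
  case 0
  then show ?case using graph_aut_inj_on[OF au] \<open>x \<in> V\<close> by (auto dest: inj_onD)
next
  case (Suc n)
  have in_V: "\<And>a b. E a b \<Longrightarrow> a \<in> V \<and> b \<in> V" using sg unfolding simple_graph_def by blast
  have edge_iff: "\<And>a b. a \<in> V \<Longrightarrow> b \<in> V \<Longrightarrow> E (\<sigma> a) (\<sigma> b) \<longleftrightarrow> E a b"
    using au unfolding graph_aut_def by blast
  show ?case
  proof
    assume "(E ^^ Suc n) (\<sigma> x) (\<sigma> y)"
    then obtain w where w: "(E ^^ n) (\<sigma> x) w" "E w (\<sigma> y)" by auto
    then obtain z where "z \<in> V" "w = \<sigma> z" using in_V graph_aut_image[OF au] by blast
    then show "(E ^^ Suc n) x y" using w Suc edge_iff by auto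
  next
    assume "(E ^^ Suc n) x y"
    then obtain z where z: "(E ^^ n) x z" "E z y" by auto
    then have "z \<in> V" using in_V by blast
    then show "(E ^^ Suc n) (\<sigma> x) (\<sigma> y)" using z Suc edge_iff by auto
  qed
qed

lemma gdist_graph_aut:
  assumes "simple_graph V E" "graph_aut V E \<sigma>" "x \<in> V" "y \<in> V"
  shows "gdist E (\<sigma> x) (\<sigma> y) = gdist E x y"
  unfolding gdist_def using relpowp_graph_aut_iff[OF assms] by simp

lemma Lset_graph_aut:
  assumes sg: "simple_graph V E" and au: "graph_aut V E \<sigma>" and "u \<in> V" "v \<in> V"
  shows "Lset V E (\<sigma> u) (\<sigma> v) = \<sigma> ` Lset V E u v"
proof -
  have "Lset V E (\<sigma> u) (\<sigma> v) = {x \<in> \<sigma> ` V. gdist E (\<sigma> u) x \<noteq> gdist E (\<sigma> v) x}"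
    unfolding Lset_def graph_aut_image[OF au] ..
  also have "\<dots> = \<sigma> ` Lset V E u v"
    using gdist_graph_aut[OF sg au \<open>u \<in> V\<close>] gdist_graph_aut[OF sg au \<open>v \<in> V\<close>]
    unfolding Lset_def by auto
  finally show ?thesis .
qed

lemma gdist_refl: "gdist E u u = 0"
  unfolding gdist_def by (rule Least_eq_0) simp

lemma left_mem_Lset:
  assumes sg: "simple_graph V E" and "connected_graph V E" and "E u v"
  shows "u \<in> Lset V E u v"
proof -
  have uv: "u \<in> V" "v \<in> V" "u \<noteq> v" using sg \<open>E u v\<close> unfolding simple_graph_def by metis+
  obtain n where "(E ^^ n) v u" using \<open>connected_graph V E\<close> uv unfolding connected_graph_def by blast
  then have "(E ^^ gdist E v u) v u" unfolding gdist_def by (rule LeastI)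
  then have "gdist E v u \<noteq> 0" using uv by (metis relpowp.simps(1))
  then show ?thesis using uv gdist_refl[of E u] unfolding Lset_def by auto
qed

definition minimal_edges :: "'a set \<Rightarrow> ('a \<Rightarrow> 'a \<Rightarrow> bool) \<Rightarrow> ('a \<times> 'a) set" where
  "minimal_edges V E = {(u, v). E u v \<and> card (Lset V E u v) = lG V E}"

lemma finite_edge_card_Lset:
  assumes "simple_graph V E"
  shows "finite {card (Lset V E u v) | u v. E u v}"
proof -
  have "{card (Lset V E u v) | u v. E u v} = case_prod (\<lambda>u v. card (Lset V E u v)) ` {p \<in> V \<times> V. case_prod E p}"
    using assms unfolding simple_graph_def by force
  then show ?thesis using assms unfolding simple_graph_def by simp
qed

lemma lG_le_card_Lset:
  assumes "simple_graph V E" "E u v"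
  shows "lG V E \<le> card (Lset V E u v)"
  unfolding lG_def using finite_edge_card_Lset[OF assms(1)] assms(2) by (auto intro: Min_le)

lemma minimal_edges_nonempty:
  assumes "simple_graph V E" "\<exists>u v. E u v"
  shows "minimal_edges V E \<noteq> {}"
proof -
  have "lG V E \<in> {card (Lset V E u v) | u v. E u v}"
    unfolding lG_def using finite_edge_card_Lset[OF assms(1)] assms(2) by (intro Min_in) auto
  then obtain u v where "E u v" "card (Lset V E u v) = lG V E" by auto
  then have "(u, v) \<in> minimal_edges V E" unfolding minimal_edges_def by simp
  then show ?thesis by blast
qed

lemma finite_minimal_edges:
  assumes "simple_graph V E"
  shows "finite (minimal_edges V E)"
proof (rule finite_subset)
  show "minimal_edges V E \<subseteq> V \<times> V"
    using assms unfolding simple_graph_def minimal_edges_def by auto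
qed (use assms in \<open>simp add: simple_graph_def\<close>)

lemma lG_pos:
  assumes sg: "simple_graph V E" and "connected_graph V E" "\<exists>u v. E u v"
  shows "lG V E > 0"
proof -
  obtain u v where "(u, v) \<in> minimal_edges V E"
    using minimal_edges_nonempty[OF sg \<open>\<exists>u v. E u v\<close>] by auto
  then have "E u v" and l: "lG V E = card (Lset V E u v)" unfolding minimal_edges_def by auto
  have "finite (Lset V E u v)" using sg unfolding simple_graph_def Lset_def by simp
  then show ?thesis using l left_mem_Lset[OF assms(1,2) \<open>E u v\<close>] card_gt_0_iff by auto
qed

lemma minimal_edges_graph_aut:
  assumes sg: "simple_graph V E" and au: "graph_aut V E \<sigma>" and "(u, v) \<in> minimal_edges V E"
  shows "(\<sigma> u, \<sigma> v) \<in> minimal_edges V E"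
proof -
  have "E u v" and l: "card (Lset V E u v) = lG V E" using assms(3) unfolding minimal_edges_def by auto
  then have uv: "u \<in> V" "v \<in> V" using sg unfolding simple_graph_def by blast+
  have "E (\<sigma> u) (\<sigma> v)" using au uv \<open>E u v\<close> unfolding graph_aut_def by blast
  moreover have "card (Lset V E (\<sigma> u) (\<sigma> v)) = lG V E"
    unfolding Lset_graph_aut[OF sg au uv] l[symmetric]
    by (rule card_image, rule inj_on_subset[OF graph_aut_inj_on[OF au]]) (auto simp: Lset_def)
  ultimately show ?thesis unfolding minimal_edges_def by simp
qed

lemma card_minimal_edges_resolving_le:
  assumes sg: "simple_graph V E" and au: "graph_aut V E \<sigma>" and "x \<in> V"
  shows "card {p \<in> minimal_edges V E. x \<in> case_prod (Lset V E) p}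
    \<le> card {p \<in> minimal_edges V E. \<sigma> x \<in> case_prod (Lset V E) p}"
proof (rule card_inj_on_le)
  let ?h = "map_prod \<sigma> \<sigma>"
  have in_V: "minimal_edges V E \<subseteq> V \<times> V"
    using sg unfolding simple_graph_def minimal_edges_def by auto
  show "inj_on ?h {p \<in> minimal_edges V E. x \<in> case_prod (Lset V E) p}"
    by (rule inj_on_subset[OF map_prod_inj_on[OF graph_aut_inj_on[OF au] graph_aut_inj_on[OF au]]])
      (use in_V in auto)
  show "?h ` {p \<in> minimal_edges V E. x \<in> case_prod (Lset V E) p}
      \<subseteq> {p \<in> minimal_edges V E. \<sigma> x \<in> case_prod (Lset V E) p}"
    using in_V minimal_edges_graph_aut[OF sg au] Lset_graph_aut[OF sg au] by fastforce
  show "finite {p \<in> minimal_edges V E. \<sigma> x \<in> case_prod (Lset V E) p}"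
    using finite_minimal_edges[OF sg] by simp
qed

lemma card_minimal_edges_resolving_eq:
  assumes sg: "simple_graph V E" and vt: "vertex_transitive V E" and "x \<in> V" "y \<in> V"
  shows "card {p \<in> minimal_edges V E. x \<in> case_prod (Lset V E) p}
    = card {p \<in> minimal_edges V E. y \<in> case_prod (Lset V E) p}"
proof -
  obtain \<sigma> \<tau> where "graph_aut V E \<sigma>" "\<sigma> x = y" "graph_aut V E \<tau>" "\<tau> y = x"
    using vt assms(3,4) unfolding vertex_transitive_def by metis
  then show ?thesis
    using card_minimal_edges_resolving_le[OF sg, of \<sigma> x] card_minimal_edges_resolving_le[OF sg, of \<tau> y]
      assms(3,4) by simp
qed

lemma local_resolving_fun_weight_ge:
  assumes sg: "simple_graph V E" and "connected_graph V E" "vertex_transitive V E" "\<exists>u v. E u v"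
    and f: "local_resolving_fun V E f"
  shows "real (card V) / real (lG V E) \<le> (\<Sum>x\<in>V. f x)"
proof -
  have "V \<noteq> {}" using sg \<open>\<exists>u v. E u v\<close> unfolding simple_graph_def by blast
  then obtain x0 where "x0 \<in> V" by blast
  show ?thesis
  proof (rule uniform_cover_weight_bound[where P = "minimal_edges V E" and L = "case_prod (Lset V E)"])
    show "finite V" using sg unfolding simple_graph_def by blast
    show "finite (minimal_edges V E)" "minimal_edges V E \<noteq> {}" "lG V E > 0"
      using finite_minimal_edges minimal_edges_nonempty lG_pos assms by blast+
    show "case_prod (Lset V E) p \<subseteq> V" for p by (auto simp: Lset_def split: prod.splits)
    show "card (case_prod (Lset V E) p) = lG V E" if "p \<in> minimal_edges V E" for p
      using that unfolding minimal_edges_def by auto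
    show "card {p \<in> minimal_edges V E. x \<in> case_prod (Lset V E) p}
        = card {p \<in> minimal_edges V E. x0 \<in> case_prod (Lset V E) p}" if "x \<in> V" for x
      using card_minimal_edges_resolving_eq[OF sg \<open>vertex_transitive V E\<close> that \<open>x0 \<in> V\<close>] .
    show "1 \<le> (\<Sum>x\<in>case_prod (Lset V E) p. f x)" if "p \<in> minimal_edges V E" for p
      using that f unfolding minimal_edges_def local_resolving_fun_def by auto
  qed
qed

lemma local_resolving_fun_const:
  assumes "simple_graph V E" "connected_graph V E" "\<exists>u v. E u v"
  shows "local_resolving_fun V E (\<lambda>_. 1 / real (lG V E))"
  unfolding local_resolving_fun_def
proof (intro conjI allI impI ballI)
  have "lG V E > 0" using lG_pos[OF assms] .
  then show "0 \<le> 1 / real (lG V E)" "1 / real (lG V E) \<le> 1" by auto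
  fix u v assume "E u v"
  then have "real (lG V E) \<le> real (card (Lset V E u v))"
    using lG_le_card_Lset[OF assms(1)] by simp
  then show "1 \<le> (\<Sum>x\<in>Lset V E u v. 1 / real (lG V E))"
    using \<open>lG V E > 0\<close> by (simp add: le_divide_eq)
qed

theorem theorem2p15:
  fixes V :: "'a set" and E :: "'a \<Rightarrow> 'a \<Rightarrow> bool"
  assumes "simple_graph V E"
    and "connected_graph V E"
    and "vertex_transitive V E"
    and "\<exists>u v. E u v"
  shows "ldim_f V E = real (card V) / real (lG V E)"
  unfolding ldim_f_def
proof (rule cInf_eq_minimum)
  have "(\<Sum>x\<in>V. 1 / real (lG V E)) = real (card V) / real (lG V E)" by simp
  then show "real (card V) / real (lG V E) \<in> {\<Sum>v\<in>V. f v |f. local_resolving_fun V E f}"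
    using local_resolving_fun_const[OF assms(1,2,4)] by (metis (mono_tags, lifting) mem_Collect_eq)
  show "real (card V) / real (lG V E) \<le> s" if "s \<in> {\<Sum>v\<in>V. f v |f. local_resolving_fun V E f}" for s
    using that local_resolving_fun_weight_ge[OF assms] by blast
qed

end
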